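(* Let $c\in\mathbb{R}$. (1) (Elliptic umbilic $D_4^-$.) Let $\boldsymbol\eta_c(x_1,x_2)=(x_1^2-x_2^2,\,-2x_1x_2+4cx_2)$. If $\mathbf y\in\mathbb{R}^2$ has exactly four preimages $\mathbf x_1,\dots,\mathbf x_4$ under $\boldsymbol\eta_c$, each with $\det[\mathrm{Jac}\,\boldsymbol\eta_c](\mathbf x_i)\ne0$, then $\mu_1+\mu_2+\mu_3+\mu_4=0$. (2) (Hyperbolic umbilic $D_4^+$.) Let $\boldsymbol\eta_c(x_1,x_2)=(x_1^2+2cx_2,\,x_2^2+2cx_1)$. If $\mathbf y\in\mathbb{R}^2$ has exactly four preimages $\mathbf x_1,\dots,\mathbf x_4$ under $\boldsymbol\eta_c$, each with nonvanishing Jacobian determinant, then $\mu_1+\mu_2+\mu_3+\mu_4=0$.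
   Context: The signed magnification of a preimage (lensed image) $\mathbf x_i$ of $\mathbf y$ is $\mu_i=1/\det[\mathrm{Jac}\,\boldsymbol\eta_c](\mathbf x_i)$. The maps above are the quantitative local forms of lensing maps near elliptic and hyperbolic umbilic caustics. *)

theory Defs
  imports "HOL-Analysis.Analysis"
begin

definition jacdet :: "(real^2 \<Rightarrow> real^2) \<Rightarrow> real^2 \<Rightarrow> real" where
  "jacdet f x = det (matrix (frechet_derivative f (at x)))"

definition magnification :: "(real^2 \<Rightarrow> real^2) \<Rightarrow> real^2 \<Rightarrow> real" where
  "magnification f x = 1 / jacdet f x"

definition eta_ell :: "real \<Rightarrow> real^2 \<Rightarrow> real^2" where
  "eta_ell c x = vector [(x$1)^2 - (x$2)^2, -2 * x$1 * x$2 + 4 * c * x$2]"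

definition eta_hyp :: "real \<Rightarrow> real^2 \<Rightarrow> real^2" where
  "eta_hyp c x = vector [(x$1)^2 + 2 * c * x$2, (x$2)^2 + 2 * c * x$1]"

end

theory Submission
  imports Defs
begin

text \<open>
  Idea: in the generic case the first coordinates t of the four lensed images are the four
  distinct roots of a monic quartic p, and the magnification of each image satisfies
  mu * p'(t) = u*t + v for constants u, v.  By Vieta, p'(r_i) = prod_{j ~= i} (r_i - r_j), and
  the Lagrange (divided difference) identity sum_i q(r_i) / prod_{j ~= i} (r_i - r_j) = 0 for
  linear q gives sum mu_i = 0.

  The generic argument needs the first coordinate to separate the images;
  this fails only in two degenerate situations, handled directly: for the elliptic map with
  y2 = 0 the four images are explicit, and for the hyperbolic map with c = 0 the reflection
  x1 -> -x1 permutes the images and reverses every magnification.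
\<close>

definition quartic :: "real \<Rightarrow> real \<Rightarrow> real \<Rightarrow> real \<Rightarrow> real \<Rightarrow> real" where
  "quartic A B C D t = t^4 + A*t^3 + B*t^2 + C*t + D"

definition quartic_deriv :: "real \<Rightarrow> real \<Rightarrow> real \<Rightarrow> real \<Rightarrow> real" where
  "quartic_deriv A B C t = 4*t^3 + 3*A*t^2 + 2*B*t + C"

text \<open>A polynomial of degree at most three with four distinct roots is zero; proved by taking
  successive divided differences.\<close>
lemma cubic_vanishing_at_four_points:
  fixes r1 r2 r3 r4 a b c d :: real
  assumes distinct: "distinct [r1, r2, r3, r4]"
    and roots: "\<And>r. r \<in> {r1, r2, r3, r4} \<Longrightarrow> a*r^3 + b*r^2 + c*r + d = 0"
  shows "a = 0 \<and> b = 0 \<and> c = 0 \<and> d = 0"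
proof -
  have slope: "a*(p^2 + p*q + q^2) + b*(p + q) + c = 0"
    if "p \<in> {r1, r2, r3, r4}" "q \<in> {r1, r2, r3, r4}" "p \<noteq> q" for p q
  proof -
    have "(p - q) * (a*(p^2 + p*q + q^2) + b*(p + q) + c)
          = (a*p^3 + b*p^2 + c*p + d) - (a*q^3 + b*q^2 + c*q + d)"
      by (simp add: algebra_simps power2_eq_square power3_eq_cube)
    also have "\<dots> = 0" using roots[OF that(1)] roots[OF that(2)] by simp
    finally show ?thesis using that(3) by simp
  qed
  have second_slope: "a*(p + q + w) + b = 0"
    if "p \<in> {r1, r2, r3, r4}" "q \<in> {r1, r2, r3, r4}" "w \<in> {r1, r2, r3, r4}"
       "p \<noteq> q" "p \<noteq> w" "q \<noteq> w" for p q w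
  proof -
    have "(q - w) * (a*(p + q + w) + b)
          = (a*(p^2 + p*q + q^2) + b*(p + q) + c) - (a*(p^2 + p*w + w^2) + b*(p + w) + c)"
      by (simp add: algebra_simps power2_eq_square)
    also have "\<dots> = 0" using slope[of p q] slope[of p w] that by simp
    finally show ?thesis using that(6) by simp
  qed
  have "(r4 - r3) * a = (a*(r1 + r2 + r4) + b) - (a*(r1 + r2 + r3) + b)"
    by (simp add: algebra_simps)
  also have "\<dots> = 0" using second_slope[of r1 r2 r4] second_slope[of r1 r2 r3] distinct by simp
  finally have a: "a = 0" using distinct by simp
  then have b: "b = 0" using second_slope[of r1 r2 r3] distinct by simp
  then have c: "c = 0" using slope[of r1 r2] distinct a by simp
  then show ?thesis using roots[of r1] a b by simp
qed

lemma vieta_quartic: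
  fixes r1 r2 r3 r4 A B C D :: real
  assumes distinct: "distinct [r1, r2, r3, r4]"
    and roots: "\<And>r. r \<in> {r1, r2, r3, r4} \<Longrightarrow> quartic A B C D r = 0"
  shows "A = -(r1 + r2 + r3 + r4)"
    and "B = r1*r2 + r1*r3 + r1*r4 + r2*r3 + r2*r4 + r3*r4"
    and "C = -(r1*r2*r3 + r1*r2*r4 + r1*r3*r4 + r2*r3*r4)"
    and "D = r1*r2*r3*r4"
proof -
  define a where "a = A + (r1 + r2 + r3 + r4)"
  define b where "b = B - (r1*r2 + r1*r3 + r1*r4 + r2*r3 + r2*r4 + r3*r4)"
  define c where "c = C + (r1*r2*r3 + r1*r2*r4 + r1*r3*r4 + r2*r3*r4)"
  define d where "d = D - r1*r2*r3*r4"
  have difference: "quartic A B C D r - (r - r1)*(r - r2)*(r - r3)*(r - r4) = a*r^3 + b*r^2 + c*r + d"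
    for r unfolding quartic_def a_def b_def c_def d_def
    by (simp add: algebra_simps power2_eq_square power3_eq_cube power4_eq_xxxx)
  have "a*r^3 + b*r^2 + c*r + d = 0" if "r \<in> {r1, r2, r3, r4}" for r
    using difference[of r] roots[OF that] that by auto
  then have "a = 0 \<and> b = 0 \<and> c = 0 \<and> d = 0"
    using cubic_vanishing_at_four_points[OF distinct] by blast
  then show "A = -(r1 + r2 + r3 + r4)"
    and "B = r1*r2 + r1*r3 + r1*r4 + r2*r3 + r2*r4 + r3*r4"
    and "C = -(r1*r2*r3 + r1*r2*r4 + r1*r3*r4 + r2*r3*r4)"
    and "D = r1*r2*r3*r4"
    unfolding a_def b_def c_def d_def by simp_all
qed

lemma quartic_deriv_at_root:
  fixes r1 r2 r3 r4 A B C D :: real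
  assumes "distinct [r1, r2, r3, r4]"
    and "\<And>r. r \<in> {r1, r2, r3, r4} \<Longrightarrow> quartic A B C D r = 0"
  shows "quartic_deriv A B C r1 = (r1 - r2)*(r1 - r3)*(r1 - r4)"
  unfolding quartic_deriv_def
  by (simp only: vieta_quartic(1-3)[OF assms]) (simp add: algebra_simps power2_eq_square power3_eq_cube)

text \<open>The third divided difference of a linear function vanishes:
  the sum of q(r_i) / prod_{j ~= i} (r_i - r_j) is zero for linear q.\<close>
lemma lagrange_identity_linear:
  fixes r1 r2 r3 r4 u v :: real
  assumes "distinct [r1, r2, r3, r4]"
  shows "(u*r1 + v) / ((r1 - r2)*(r1 - r3)*(r1 - r4)) + (u*r2 + v) / ((r2 - r1)*(r2 - r3)*(r2 - r4))
       + (u*r3 + v) / ((r3 - r1)*(r3 - r2)*(r3 - r4)) + (u*r4 + v) / ((r4 - r1)*(r4 - r2)*(r4 - r3)) = 0"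
proof -
  define V where "V = (r1 - r2)*(r1 - r3)*(r1 - r4)*(r2 - r3)*(r2 - r4)*(r3 - r4)"
  have "V \<noteq> 0" using assms unfolding V_def by auto
  then have over_V: "n / x = n * y / V" if "x * y = V" for n x y
    using that by (auto simp: divide_simps)
  have "(u*r1 + v) / ((r1 - r2)*(r1 - r3)*(r1 - r4)) = (u*r1 + v) * ((r2 - r3)*(r2 - r4)*(r3 - r4)) / V"
    by (rule over_V) (simp add: V_def)
  moreover have "(u*r2 + v) / ((r2 - r1)*(r2 - r3)*(r2 - r4)) = (u*r2 + v) * (-(r1 - r3)*(r1 - r4)*(r3 - r4)) / V"
    by (rule over_V) (simp add: V_def algebra_simps)
  moreover have "(u*r3 + v) / ((r3 - r1)*(r3 - r2)*(r3 - r4)) = (u*r3 + v) * ((r1 - r2)*(r1 - r4)*(r2 - r4)) / V"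
    by (rule over_V) (simp add: V_def algebra_simps)
  moreover have "(u*r4 + v) / ((r4 - r1)*(r4 - r2)*(r4 - r3)) = (u*r4 + v) * (-(r1 - r2)*(r1 - r3)*(r2 - r3)) / V"
    by (rule over_V) (simp add: V_def algebra_simps)
  moreover have "(u*r1 + v) * ((r2 - r3)*(r2 - r4)*(r3 - r4)) + (u*r2 + v) * (-(r1 - r3)*(r1 - r4)*(r3 - r4))
      + (u*r3 + v) * ((r1 - r2)*(r1 - r4)*(r2 - r4)) + (u*r4 + v) * (-(r1 - r2)*(r1 - r3)*(r2 - r3)) = 0"
    by algebra
  ultimately show ?thesis by (simp add: add_divide_distrib[symmetric])
qed

lemma sum_over_four_quartic_roots:
  fixes f g :: "'a \<Rightarrow> real" and S :: "'a set"
  assumes card: "card S = 4" and inj: "inj_on f S"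
    and roots: "\<forall>x\<in>S. quartic A B C D (f x) = 0"
    and weights: "\<forall>x\<in>S. g x * quartic_deriv A B C (f x) = u * f x + v"
  shows "(\<Sum>x\<in>S. g x) = 0"
proof -
  obtain p1 p2 p3 p4 where S: "S = {p1, p2, p3, p4}" and distinct_p: "distinct [p1, p2, p3, p4]"
    using card by (auto simp: card_Suc_eq numeral_eq_Suc)
  define r1 r2 r3 r4 where "r1 = f p1" and "r2 = f p2" and "r3 = f p3" and "r4 = f p4"
  note r_defs = r1_def r2_def r3_def r4_def
  have distinct: "distinct [r1, r2, r3, r4]"
    using inj distinct_p unfolding S r_defs inj_on_def by auto
  have root_set: "quartic A B C D r = 0" if "r \<in> {r1, r2, r3, r4}" for r
    using roots that unfolding S r_defs by auto
  have "quartic_deriv A B C r1 = (r1 - r2)*(r1 - r3)*(r1 - r4)"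
    by (rule quartic_deriv_at_root) (use distinct root_set in auto)
  moreover have "quartic_deriv A B C r2 = (r2 - r1)*(r2 - r3)*(r2 - r4)"
    by (rule quartic_deriv_at_root) (use distinct root_set in auto)
  moreover have "quartic_deriv A B C r3 = (r3 - r1)*(r3 - r2)*(r3 - r4)"
    by (rule quartic_deriv_at_root) (use distinct root_set in auto)
  moreover have "quartic_deriv A B C r4 = (r4 - r1)*(r4 - r2)*(r4 - r3)"
    by (rule quartic_deriv_at_root) (use distinct root_set in auto)
  ultimately have "g p1 = (u*r1 + v) / ((r1 - r2)*(r1 - r3)*(r1 - r4))"
    and "g p2 = (u*r2 + v) / ((r2 - r1)*(r2 - r3)*(r2 - r4))"
    and "g p3 = (u*r3 + v) / ((r3 - r1)*(r3 - r2)*(r3 - r4))"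
    and "g p4 = (u*r4 + v) / ((r4 - r1)*(r4 - r2)*(r4 - r3))"
    using weights distinct unfolding S r_defs by (auto simp: eq_divide_eq)
  moreover have "(\<Sum>x\<in>S. g x) = g p1 + g p2 + g p3 + g p4"
    using distinct_p unfolding S by simp
  ultimately show ?thesis using lagrange_identity_linear[OF distinct] by simp
qed

lemma square_root_cases:
  fixes t a :: real
  assumes "t^2 = a"
  shows "t = sqrt a \<or> t = - sqrt a"
  using assms real_sqrt_abs[of t] by (cases "t \<ge> 0") auto

lemma card_four_subset:
  assumes "card S = 4" and "S \<subseteq> {a, b, c, d}"
  shows "S = {a, b, c, d}" and "distinct [a, b, c, d]"
proof -
  have "card {a, b, c, d} \<le> 4" using card_length[of "[a, b, c, d]"] by simp
  moreover have "4 \<le> card {a, b, c, d}" using card_mono[OF _ assms(2)] assms(1) by simp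
  ultimately have "card {a, b, c, d} = card S" using assms(1) by simp
  then show "S = {a, b, c, d}" and "distinct [a, b, c, d]"
    using card_subset_eq[OF _ assms(2)] card_distinct[of "[a, b, c, d]"] assms(1) by simp_all
qed

lemma partial_fractions_fold:
  fixes r a b :: real
  assumes "r \<noteq> 0" "a \<noteq> 0" "b \<noteq> 0" and "b - a = 2 * r"
  shows "1 / (4 * r * a) + 1 / (-4 * r * b) + 2 / (-4 * a * b) = 0"
proof -
  have "1 / (4 * r * a) + 1 / (-4 * r * b) + 2 / (-4 * a * b) = (b - a - 2 * r) / (4 * r * a * b)"
    using assms(1-3) by (simp add: field_simps)
  then show ?thesis using assms(4) by simp
qed

lemma vector2_as_axes: "(vector [a, b] :: real^2) = a *\<^sub>R axis 1 1 + b *\<^sub>R axis 2 1"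
  by (simp add: vec_eq_iff forall_2 axis_def)

lemma vector2_eqI: "(x::real^2) $ 1 = z $ 1 \<Longrightarrow> x $ 2 = z $ 2 \<Longrightarrow> x = z"
  by (simp add: vec_eq_iff forall_2)

lemma has_derivative_vec_nth: "((\<lambda>x::real^'n. x $ i) has_derivative (\<lambda>h. h $ i)) F"
  by (rule bounded_linear.has_derivative[OF bounded_linear_vec_nth has_derivative_ident])

lemma has_derivative_eta_ell:
  "(eta_ell c has_derivative
     (\<lambda>h. vector [2*x$1*h$1 - 2*x$2*h$2, -2*x$2*h$1 + (4*c - 2*x$1)*h$2])) (at x)"
  unfolding eta_ell_def[abs_def] vector2_as_axes
  by (rule derivative_eq_intros has_derivative_vec_nth refl | simp)+ (auto simp: algebra_simps)

lemma has_derivative_eta_hyp: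
  "(eta_hyp c has_derivative (\<lambda>h. vector [2*x$1*h$1 + 2*c*h$2, 2*c*h$1 + 2*x$2*h$2])) (at x)"
  unfolding eta_hyp_def[abs_def] vector2_as_axes
  by (rule derivative_eq_intros has_derivative_vec_nth refl | simp)+ (auto simp: algebra_simps)

lemma jacdet_eta_ell: "jacdet (eta_ell c) x = -4*(x$1)^2 + 8*c*x$1 - 4*(x$2)^2"
  unfolding jacdet_def frechet_derivative_at[OF has_derivative_eta_ell, symmetric]
  by (simp add: det_2 matrix_def axis_def power2_eq_square algebra_simps)

lemma jacdet_eta_hyp: "jacdet (eta_hyp c) x = 4*(x$1*x$2 - c^2)"
  unfolding jacdet_def frechet_derivative_at[OF has_derivative_eta_hyp, symmetric]
  by (simp add: det_2 matrix_def axis_def power2_eq_square algebra_simps)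

lemma eta_ell_eq_iff:
  "eta_ell c x = y \<longleftrightarrow> (x$1)^2 - (x$2)^2 = y$1 \<and> -2*x$1*x$2 + 4*c*x$2 = y$2"
  by (auto simp: eta_ell_def vec_eq_iff forall_2)

lemma eta_hyp_eq_iff:
  "eta_hyp c x = y \<longleftrightarrow> (x$1)^2 + 2*c*x$2 = y$1 \<and> (x$2)^2 + 2*c*x$1 = y$2"
  by (auto simp: eta_hyp_def vec_eq_iff forall_2)

text \<open>Elliptic umbilic: eliminating x2 shows that the first coordinate of every image is a root
  of a quartic, whose derivative there is the Jacobian times c - x1/2.\<close>
lemma eta_ell_preimage_quartic:
  assumes "eta_ell c x = y"
  shows "quartic (-4*c) (4*c^2 - y$1) (4*c*y$1) (-4*c^2*y$1 - (y$2)^2/4) (x$1) = 0"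
proof -
  have y: "y$1 = (x$1)^2 - (x$2)^2" "y$2 = -2*x$1*x$2 + 4*c*x$2"
    using assms by (auto simp: eta_ell_eq_iff)
  show ?thesis unfolding y
    by (simp add: quartic_def field_simps power2_eq_square power3_eq_cube power4_eq_xxxx)
qed

lemma eta_ell_quartic_deriv:
  assumes "eta_ell c x = y"
  shows "quartic_deriv (-4*c) (4*c^2 - y$1) (4*c*y$1) (x$1) = jacdet (eta_ell c) x * (c - x$1/2)"
proof -
  have y: "y$1 = (x$1)^2 - (x$2)^2" using assms by (auto simp: eta_ell_eq_iff)
  show ?thesis unfolding y
    by (simp add: quartic_deriv_def jacdet_eta_ell algebra_simps power2_eq_square power3_eq_cube)
qed

text \<open>If y2 ~= 0, the line x1 = 2c contains no image, and elsewhere x2 is determined by x1.\<close>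
lemma eta_ell_fibre_inj_first:
  assumes "y$2 \<noteq> 0"
  shows "inj_on (\<lambda>x. x$1) {x. eta_ell c x = y}"
proof (rule inj_onI)
  fix x z
  assume "x \<in> {x. eta_ell c x = y}" "z \<in> {x. eta_ell c x = y}" and same_first: "x$1 = z$1"
  then have x2: "x$2 * (4*c - 2*x$1) = y$2" and z2: "z$2 * (4*c - 2*x$1) = y$2"
    by (auto simp: eta_ell_eq_iff algebra_simps)
  then have "4*c - 2*x$1 \<noteq> 0" using assms by (metis mult_zero_right)
  moreover have "x$2 * (4*c - 2*x$1) = z$2 * (4*c - 2*x$1)" using x2 z2 by simp
  ultimately have "x$2 = z$2" by simp
  then show "x = z" using same_first by (rule_tac vector2_eqI) auto
qed

lemma eta_hyp_preimage_quartic: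
  assumes "eta_hyp c x = y"
  shows "quartic 0 (-2*y$1) (8*c^3) ((y$1)^2 - 4*c^2*y$2) (x$1) = 0"
proof -
  have y: "y$1 = (x$1)^2 + 2*c*x$2" "y$2 = (x$2)^2 + 2*c*x$1"
    using assms by (auto simp: eta_hyp_eq_iff)
  show ?thesis unfolding y
    by (simp add: quartic_def algebra_simps power2_eq_square power3_eq_cube power4_eq_xxxx)
qed

lemma eta_hyp_quartic_deriv:
  assumes "eta_hyp c x = y"
  shows "quartic_deriv 0 (-2*y$1) (8*c^3) (x$1) = jacdet (eta_hyp c) x * (-2*c)"
proof -
  have y: "y$1 = (x$1)^2 + 2*c*x$2" using assms by (auto simp: eta_hyp_eq_iff)
  show ?thesis unfolding y
    by (simp add: quartic_deriv_def jacdet_eta_hyp algebra_simps power2_eq_square power3_eq_cube)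
qed

lemma eta_hyp_fibre_inj_first:
  assumes "c \<noteq> 0"
  shows "inj_on (\<lambda>x. x$1) {x. eta_hyp c x = y}"
proof (rule inj_onI)
  fix x z
  assume "x \<in> {x. eta_hyp c x = y}" "z \<in> {x. eta_hyp c x = y}" and same_first: "x$1 = z$1"
  then have "(x$1)^2 + 2*c*x$2 = y$1" and "(x$1)^2 + 2*c*z$2 = y$1"
    by (auto simp: eta_hyp_eq_iff)
  then have "2*c*x$2 = 2*c*z$2" by linarith
  then have "x$2 = z$2" using assms by simp
  then show "x = z" using same_first by (rule_tac vector2_eqI) auto
qed

lemma magnification_times:
  assumes "jacdet f x \<noteq> 0" and "q = jacdet f x * l"
  shows "magnification f x * q = l"
  using assms by (simp add: magnification_def)

lemma elliptic_sum_generic: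
  assumes card: "card {x. eta_ell c x = y} = 4"
    and nondeg: "\<forall>x\<in>{x. eta_ell c x = y}. jacdet (eta_ell c) x \<noteq> 0"
    and "y$2 \<noteq> 0"
  shows "(\<Sum>x\<in>{x. eta_ell c x = y}. magnification (eta_ell c) x) = 0"
proof (rule sum_over_four_quartic_roots[OF card eta_ell_fibre_inj_first[OF \<open>y$2 \<noteq> 0\<close>]])
  show "\<forall>x\<in>{x. eta_ell c x = y}. quartic (-4*c) (4*c^2 - y$1) (4*c*y$1) (-4*c^2*y$1 - (y$2)^2/4) (x$1) = 0"
    using eta_ell_preimage_quartic by blast
  show "\<forall>x\<in>{x. eta_ell c x = y}.
      magnification (eta_ell c) x * quartic_deriv (-4*c) (4*c^2 - y$1) (4*c*y$1) (x$1) = (-1/2) * x$1 + c"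
    using nondeg eta_ell_quartic_deriv by (auto intro!: magnification_times)
qed

lemma hyperbolic_sum_generic:
  assumes card: "card {x. eta_hyp c x = y} = 4"
    and nondeg: "\<forall>x\<in>{x. eta_hyp c x = y}. jacdet (eta_hyp c) x \<noteq> 0"
    and "c \<noteq> 0"
  shows "(\<Sum>x\<in>{x. eta_hyp c x = y}. magnification (eta_hyp c) x) = 0"
proof (rule sum_over_four_quartic_roots[OF card eta_hyp_fibre_inj_first[OF \<open>c \<noteq> 0\<close>]])
  show "\<forall>x\<in>{x. eta_hyp c x = y}. quartic 0 (-2*y$1) (8*c^3) ((y$1)^2 - 4*c^2*y$2) (x$1) = 0"
    using eta_hyp_preimage_quartic by blast
  show "\<forall>x\<in>{x. eta_hyp c x = y}.
      magnification (eta_hyp c) x * quartic_deriv 0 (-2*y$1) (8*c^3) (x$1) = 0 * x$1 + (-2*c)"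
    using nondeg eta_hyp_quartic_deriv by (auto intro!: magnification_times)
qed

text \<open>Hyperbolic umbilic with c = 0: the reflection x1 -> -x1 permutes the images and negates
  the Jacobian 4 x1 x2, so the magnifications cancel (whatever the number of images).\<close>
lemma hyperbolic_sum_symmetric:
  "(\<Sum>x\<in>{x. eta_hyp 0 x = y}. magnification (eta_hyp 0) x) = 0"
proof -
  define refl :: "real^2 \<Rightarrow> real^2" where "refl x = vector [-(x$1), x$2]" for x
  let ?S = "{x. eta_hyp 0 x = y}" and ?m = "magnification (eta_hyp 0)"
  have involution: "refl (refl x) = x" for x by (simp add: refl_def vec_eq_iff forall_2)
  have invariant: "refl x \<in> ?S" if "x \<in> ?S" for x using that by (simp add: refl_def eta_hyp_eq_iff)
  have odd: "- ?m (refl x) = ?m x" for x by (simp add: magnification_def jacdet_eta_hyp refl_def)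
  have "sum ?m ?S = sum (\<lambda>x. - ?m x) ?S"
    by (rule sum.reindex_bij_witness[of _ refl refl]) (use involution invariant odd in auto)
  then show ?thesis by (simp add: sum_negf)
qed

text \<open>Elliptic umbilic with y2 = 0: the images lie on the axis x2 = 0 or on the line x1 = 2c, so they
  are (+-r, 0) and (2c, +-w) with r^2 = y1 and w^2 = 4c^2 - r^2; their magnifications are explicit.\<close>
lemma elliptic_sum_fold:
  assumes card: "card {x. eta_ell c x = y} = 4"
    and nondeg: "\<forall>x\<in>{x. eta_ell c x = y}. jacdet (eta_ell c) x \<noteq> 0"
    and fold: "y$2 = 0"
  shows "(\<Sum>x\<in>{x. eta_ell c x = y}. magnification (eta_ell c) x) = 0"
proof -
  let ?S = "{x. eta_ell c x = y}"
  define r where "r = sqrt (y$1)"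
  define w where "w = sqrt (4*c^2 - y$1)"
  define p1 p2 p3 p4 :: "real^2"
    where "p1 = vector [r, 0]" and "p2 = vector [-r, 0]" and "p3 = vector [2*c, w]" and "p4 = vector [2*c, -w]"
  have "?S \<subseteq> {p1, p2, p3, p4}"
  proof
    fix x assume "x \<in> ?S"
    then have first: "(x$1)^2 - (x$2)^2 = y$1" and "2 * x$2 * (2*c - x$1) = 0"
      using fold by (auto simp: eta_ell_eq_iff algebra_simps)
    then consider "x$2 = 0" | "x$1 = 2*c" by auto
    then show "x \<in> {p1, p2, p3, p4}"
    proof cases
      case 1
      then have "(x$1)^2 = y$1" using first by simp
      then have "x$1 = r \<or> x$1 = -r" unfolding r_def by (rule square_root_cases)
      then have "x = p1 \<or> x = p2" using 1 unfolding p1_def p2_def by (auto intro: vector2_eqI)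
      then show ?thesis by blast
    next
      case 2
      then have "(x$2)^2 = 4*c^2 - y$1" using first by (simp add: power_mult_distrib)
      then have "x$2 = w \<or> x$2 = -w" unfolding w_def by (rule square_root_cases)
      then have "x = p3 \<or> x = p4" using 2 unfolding p3_def p4_def by (auto intro: vector2_eqI)
      then show ?thesis by blast
    qed
  qed
  note S = card_four_subset(1)[OF card this] and distinct = card_four_subset(2)[OF card this]
  have "p1 \<in> ?S" "p3 \<in> ?S" using S by auto
  then have "r^2 = y$1" "(2*c)^2 - w^2 = y$1" by (simp_all add: eta_ell_eq_iff p1_def p3_def)
  then have w: "w^2 = (2*c - r) * (2*c + r)" by (simp add: algebra_simps power2_eq_square)
  have "jacdet (eta_ell c) p3 = -4 * w^2" "jacdet (eta_ell c) p4 = -4 * w^2"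
    by (simp_all add: jacdet_eta_ell p3_def p4_def power2_eq_square)
  then have jac: "jacdet (eta_ell c) p1 = 4 * r * (2*c - r)" "jacdet (eta_ell c) p2 = -4 * r * (2*c + r)"
    "jacdet (eta_ell c) p3 = -4 * (2*c - r) * (2*c + r)" "jacdet (eta_ell c) p4 = -4 * (2*c - r) * (2*c + r)"
    unfolding w by (simp_all add: jacdet_eta_ell p1_def p2_def power2_eq_square algebra_simps)
  have "jacdet (eta_ell c) p1 \<noteq> 0" "jacdet (eta_ell c) p2 \<noteq> 0" using nondeg S by auto
  then have "r \<noteq> 0" "2*c - r \<noteq> 0" "2*c + r \<noteq> 0" unfolding jac by auto
  then have "1 / (4 * r * (2*c - r)) + 1 / (-4 * r * (2*c + r)) + 2 / (-4 * (2*c - r) * (2*c + r)) = 0"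
    by (rule partial_fractions_fold) simp
  moreover have "(\<Sum>x\<in>?S. magnification (eta_ell c) x)
      = 1 / jacdet (eta_ell c) p1 + 1 / jacdet (eta_ell c) p2 + 2 / jacdet (eta_ell c) p3"
    unfolding S using distinct jac by (simp add: magnification_def)
  ultimately show ?thesis unfolding jac by simp
qed

theorem theorem8p1:
  fixes c :: real and y :: "real^2"
  shows "(card {x. eta_ell c x = y} = 4 \<and> (\<forall>x\<in>{x. eta_ell c x = y}. jacdet (eta_ell c) x \<noteq> 0)
           \<longrightarrow> (\<Sum>x\<in>{x. eta_ell c x = y}. magnification (eta_ell c) x) = 0)
       \<and> (card {x. eta_hyp c x = y} = 4 \<and> (\<forall>x\<in>{x. eta_hyp c x = y}. jacdet (eta_hyp c) x \<noteq> 0)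
           \<longrightarrow> (\<Sum>x\<in>{x. eta_hyp c x = y}. magnification (eta_hyp c) x) = 0)"
proof (intro conjI impI)
  assume "card {x. eta_ell c x = y} = 4 \<and> (\<forall>x\<in>{x. eta_ell c x = y}. jacdet (eta_ell c) x \<noteq> 0)"
  then show "(\<Sum>x\<in>{x. eta_ell c x = y}. magnification (eta_ell c) x) = 0"
    using elliptic_sum_fold elliptic_sum_generic by (cases "y$2 = 0") auto
next
  assume "card {x. eta_hyp c x = y} = 4 \<and> (\<forall>x\<in>{x. eta_hyp c x = y}. jacdet (eta_hyp c) x \<noteq> 0)"
  then show "(\<Sum>x\<in>{x. eta_hyp c x = y}. magnification (eta_hyp c) x) = 0"
    using hyperbolic_sum_symmetric hyperbolic_sum_generic by (cases "c = 0") auto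
qed

end
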